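(* Let $G=\langle x\rangle\neq 1$ be a finite cyclic group and let $m\geq 2$ be an integer. Then $G$ admits an $m$-PDR of valency $3$ if and only if neither of the following holds: (i) $m=2$ and $o(x)<5$; (ii) $m=3$ and $o(x)=2$.
   Context: For a group $G$ and an integer $m\geq 2$, write $g_i$ for the element $(g,i)$ of $G\times\mathbb{Z}_m$. Given subsets $T_{i,j}\subseteq G$ for $i,j\in\mathbb{Z}_m$, the $m$-Cayley digraph $\mathrm{Cay}(G,T_{i,j}:i,j\in\mathbb{Z}_m)$ is the digraph with vertex set $G\times\mathbb{Z}_m$ and arc set $\bigcup_{i,j\in\mathbb{Z}_m}\{(g_i,(tg)_j): t\in T_{i,j},\, g\in G\}$. It is called an $m$-partite Cayley digraph if $T_{i,i}=\emptyset$ for all $i\in\mathbb{Z}_m$. A digraph is regular of valency $k$ if every vertex has out-valency $k$ and in-valency $k$. A group $G$ admits an $m$-PDR ($m$-partite digraphical representation) of valency $k$ if there exists an $m$-partite Cayley digraph $\Gamma$ over $G$ which is regular of valency $k$ and whose full automorphism group $\mathrm{Aut}(\Gamma)$ is isomorphic to $G$. $o(x)$ denotes the order of $x$. *)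

theory Defs
  imports "HOL-Algebra.Algebra"
begin

text \<open>Vertices of an m-Cayley digraph over G: pairs (g,i) with g in G and i in {0..<m}
  (the index set {0..<m} models Z_m).\<close>

definition mcay_verts :: "('a,'b) monoid_scheme \<Rightarrow> nat \<Rightarrow> ('a \<times> nat) set" where
  "mcay_verts G m = carrier G \<times> {..<m}"

definition mcay_arcs ::
  "('a,'b) monoid_scheme \<Rightarrow> nat \<Rightarrow> (nat \<Rightarrow> nat \<Rightarrow> 'a set) \<Rightarrow> (('a \<times> nat) \<times> ('a \<times> nat)) set" where
  "mcay_arcs G m T = {((g, i), (t \<otimes>\<^bsub>G\<^esub> g, j)) | g i j t.
      i < m \<and> j < m \<and> g \<in> carrier G \<and> t \<in> T i j}"

definition regular_digraph :: "'v set \<Rightarrow> ('v \<times> 'v) set \<Rightarrow> nat \<Rightarrow> bool" where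
  "regular_digraph V A k \<longleftrightarrow>
     (\<forall>v\<in>V. card {w. (v, w) \<in> A} = k \<and> card {u. (u, v) \<in> A} = k)"

definition digraph_auts :: "'v set \<Rightarrow> ('v \<times> 'v) set \<Rightarrow> ('v \<Rightarrow> 'v) set" where
  "digraph_auts V A = {f. bij_betw f V V \<and> f \<in> extensional V \<and>
      (\<forall>u\<in>V. \<forall>v\<in>V. (u, v) \<in> A \<longleftrightarrow> (f u, f v) \<in> A)}"

definition Aut_digraph :: "'v set \<Rightarrow> ('v \<times> 'v) set \<Rightarrow> ('v \<Rightarrow> 'v) monoid" where
  "Aut_digraph V A = \<lparr>carrier = digraph_auts V A, monoid.mult = (\<lambda>f g. compose V f g),
      monoid.one = restrict id V\<rparr>"

definition admits_mPDR :: "('a,'b) monoid_scheme \<Rightarrow> nat \<Rightarrow> nat \<Rightarrow> bool" where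
  "admits_mPDR G m k \<longleftrightarrow>
     (\<exists>T. (\<forall>i<m. \<forall>j<m. T i j \<subseteq> carrier G) \<and> (\<forall>i<m. T i i = {}) \<and>
          regular_digraph (mcay_verts G m) (mcay_arcs G m T) k \<and>
          G \<cong> Aut_digraph (mcay_verts G m) (mcay_arcs G m T))"

end

theory Submission
  imports Defs
begin

(* Right multiplications by elements of the abelian group G are automorphisms of every
   m-Cayley digraph over G, and they form a copy of G inside Aut; so G is isomorphic to Aut
   exactly when there are no other automorphisms.

   Sufficiency: number the vertices by the integers mod N = m * ord x along the spiral
   p |-> (x^(p div m), p mod m) and send an arc from p to p + d for every offset d in a set
   D (p mod m) of three offsets containing 1.  If the arc p -> p + 1 is the only arc that is
   not reciprocated, every automorphism commutes with p |-> p + 1 and is therefore a shift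
   of the spiral; a set E of offsets occurring only in layer 0 forces the shift to be a
   multiple of m, i.e. a right multiplication.  Suitable offsets exist for m = 2, ord x >= 5,
   for m >= 3, ord x >= 3, and for ord x = 2, m >= 4.

   Necessity: for m = 2 and ord x <= 4 the connection sets T 0 1 and T 1 0 have three
   elements, so their complements have at most one, and they are translates of each other;
   for m = 3 and ord x = 2 the degree conditions force singletons on a directed 3-cycle of
   layers and full sets on the reverse cycle.  In both cases a map
   (g, i) |-> (c i * g, pi i) that moves the layers is an automorphism which is not a right
   multiplication. *)

section \<open>Automorphisms of m-Cayley digraphs\<close>

definition mcay_twist ::
  "('a, 'b) monoid_scheme \<Rightarrow> nat \<Rightarrow> (nat \<Rightarrow> 'a) \<Rightarrow> (nat \<Rightarrow> nat) \<Rightarrow> 'a \<times> nat \<Rightarrow> 'a \<times> nat"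
  where "mcay_twist G m c \<pi> = (\<lambda>(g, i) \<in> mcay_verts G m. (c i \<otimes>\<^bsub>G\<^esub> g, \<pi> i))"

abbreviation mcay_translation :: "('a, 'b) monoid_scheme \<Rightarrow> nat \<Rightarrow> 'a \<Rightarrow> 'a \<times> nat \<Rightarrow> 'a \<times> nat"
  where "mcay_translation G m h \<equiv> mcay_twist G m (\<lambda>_. h) id"

lemma mem_mcay_verts [simp]: "(g, i) \<in> mcay_verts G m \<longleftrightarrow> g \<in> carrier G \<and> i < m"
  by (simp add: mcay_verts_def)

lemma finite_digraph_auts: "finite V \<Longrightarrow> finite (digraph_auts V A)"
proof -
  assume "finite V"
  have "digraph_auts V A \<subseteq> V \<rightarrow>\<^sub>E V"
    unfolding digraph_auts_def PiE_def bij_betw_def by blast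
  then show ?thesis
    by (rule finite_subset) (simp add: finite_PiE \<open>finite V\<close>)
qed

context group
begin

lemma mcay_arcs_iff:
  assumes "\<forall>i<m. \<forall>j<m. T i j \<subseteq> carrier G"
  shows "((g, i), (g', j)) \<in> mcay_arcs G m T \<longleftrightarrow>
    i < m \<and> j < m \<and> g \<in> carrier G \<and> g' \<in> carrier G \<and> g' \<otimes> inv g \<in> T i j"
proof
  assume "((g, i), (g', j)) \<in> mcay_arcs G m T"
  then obtain t where "i < m" "j < m" "g \<in> carrier G" "t \<in> T i j" "g' = t \<otimes> g"
    by (auto simp: mcay_arcs_def)
  moreover from this assms have "t \<in> carrier G"
    by blast
  ultimately show "i < m \<and> j < m \<and> g \<in> carrier G \<and> g' \<in> carrier G \<and> g' \<otimes> inv g \<in> T i j"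
    by (simp add: m_assoc)
next
  assume arc: "i < m \<and> j < m \<and> g \<in> carrier G \<and> g' \<in> carrier G \<and> g' \<otimes> inv g \<in> T i j"
  then have "g' = (g' \<otimes> inv g) \<otimes> g"
    by (simp add: m_assoc)
  with arc show "((g, i), (g', j)) \<in> mcay_arcs G m T"
    unfolding mcay_arcs_def by fast
qed

lemma mcay_arcs_in_verts:
  assumes "\<forall>i<m. \<forall>j<m. T i j \<subseteq> carrier G" and "(u, w) \<in> mcay_arcs G m T"
  shows "u \<in> mcay_verts G m" "w \<in> mcay_verts G m"
proof -
  from assms(2) obtain g i t j where "u = (g, i)" "w = (t \<otimes> g, j)"
    "i < m" "j < m" "g \<in> carrier G" "t \<in> T i j"
    by (auto simp: mcay_arcs_def)
  with assms(1) show "u \<in> mcay_verts G m" "w \<in> mcay_verts G m"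
    by auto
qed

lemma mcay_arcs_from_one_iff:
  assumes "\<forall>i<m. \<forall>j<m. T i j \<subseteq> carrier G" and "i < m"
  shows "((\<one>, i), (t, j)) \<in> mcay_arcs G m T \<longleftrightarrow> j < m \<and> t \<in> T i j"
proof -
  have "t \<in> carrier G" if "j < m" "t \<in> T i j"
    using assms that by blast
  then show ?thesis
    using assms by (auto simp: mcay_arcs_iff[OF assms(1)])
qed

lemma mcay_arcs_to_one_iff:
  assumes "\<forall>i<m. \<forall>j<m. T i j \<subseteq> carrier G" and "j < m"
  shows "((g, i), (\<one>, j)) \<in> mcay_arcs G m T \<longleftrightarrow> i < m \<and> g \<in> carrier G \<and> inv g \<in> T i j"
  using assms by (auto simp: mcay_arcs_iff[OF assms(1)])

lemma mcay_out_neighbours_one: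
  assumes "\<forall>i<m. \<forall>j<m. T i j \<subseteq> carrier G" and "i < m"
  shows "{w. ((\<one>, i), w) \<in> mcay_arcs G m T} = (\<lambda>(j, t). (t, j)) ` (SIGMA j:{..<m}. T i j)"
  by (auto simp: mcay_arcs_from_one_iff[OF assms])

lemma mcay_in_neighbours_one:
  assumes "\<forall>i<m. \<forall>j<m. T i j \<subseteq> carrier G" and "j < m"
  shows "{u. (u, (\<one>, j)) \<in> mcay_arcs G m T} = (\<lambda>(i, t). (inv t, i)) ` (SIGMA i:{..<m}. T i j)"
proof -
  have "(g, i) \<in> (\<lambda>(i, t). (inv t, i)) ` (SIGMA i:{..<m}. T i j)"
    if "i < m" "g \<in> carrier G" "inv g \<in> T i j" for g i
    using that by (intro image_eqI[of _ _ "(i, inv g)"]) auto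
  moreover have "t \<in> carrier G" if "i < m" "t \<in> T i j" for i t
    using assms that by blast
  ultimately show ?thesis
    by (auto simp: mcay_arcs_to_one_iff[OF assms])
qed

lemma regular_mcay_degree_sums:
  assumes fin: "finite (carrier G)" and T: "\<forall>i<m. \<forall>j<m. T i j \<subseteq> carrier G"
    and reg: "regular_digraph (mcay_verts G m) (mcay_arcs G m T) k" and i: "i < m"
  shows "(\<Sum>j<m. card (T i j)) = k" "(\<Sum>j<m. card (T j i)) = k"
proof -
  have fin_T: "\<forall>j\<in>{..<m}. finite (T i j) \<and> finite (T j i)"
    using T i by (auto intro: finite_subset[OF _ fin])
  have "inj_on (\<lambda>(j, t). (inv t, j)) (SIGMA j:{..<m}. T j i)"
    using T i inv_inj by (fastforce simp: inj_on_def)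
  then have "card {u. (u, (\<one>, i)) \<in> mcay_arcs G m T} = (\<Sum>j<m. card (T j i))"
    using fin_T by (simp add: mcay_in_neighbours_one[OF T i] card_image)
  moreover have "card {w. ((\<one>, i), w) \<in> mcay_arcs G m T} = (\<Sum>j<m. card (T i j))"
    using fin_T by (simp add: mcay_out_neighbours_one[OF T i] card_image inj_on_def)
  moreover have "(\<one>, i) \<in> mcay_verts G m"
    using i by simp
  ultimately show "(\<Sum>j<m. card (T i j)) = k" "(\<Sum>j<m. card (T j i)) = k"
    using reg unfolding regular_digraph_def by auto
qed

lemma l_coset_mult_mem_iff:
  "\<lbrakk>a \<in> carrier G; s \<in> carrier G; H \<subseteq> carrier G\<rbrakk> \<Longrightarrow> a \<otimes> s \<in> a <# H \<longleftrightarrow> s \<in> H"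
  by (auto simp: l_coset_def)

lemma l_coset_carrier_Diff:
  "\<lbrakk>a \<in> carrier G; A \<subseteq> carrier G\<rbrakk> \<Longrightarrow> a <# (carrier G - A) = carrier G - (a <# A)"
proof -
  assume a: "a \<in> carrier G" and A: "A \<subseteq> carrier G"
  have "y \<in> a <# (carrier G - A)" if "y \<in> carrier G" "y \<notin> a <# A" for y
  proof -
    have "y = a \<otimes> (inv a \<otimes> y)"
      using a that(1) by (simp add: m_assoc [symmetric])
    moreover have "inv a \<otimes> y \<in> carrier G - A"
      using that a \<open>y = a \<otimes> (inv a \<otimes> y)\<close> unfolding l_coset_def by auto
    ultimately show ?thesis
      unfolding l_coset_def by blast
  qed
  moreover have "a \<otimes> h \<notin> a <# A" if "h \<in> carrier G - A" for h
    using that a A by (auto simp: l_coset_def dest: subsetD)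
  ultimately show ?thesis
    using a by (auto simp: l_coset_def)
qed

lemma mcay_translation_mult:
  "\<lbrakk>a \<in> carrier G; b \<in> carrier G\<rbrakk> \<Longrightarrow> mcay_translation G m (a \<otimes> b)
     = compose (mcay_verts G m) (mcay_translation G m a) (mcay_translation G m b)"
  by (auto simp: mcay_twist_def compose_def m_assoc fun_eq_iff)

lemma inj_on_mcay_translation: "0 < m \<Longrightarrow> inj_on (mcay_translation G m) (carrier G)"
proof (intro inj_onI)
  fix a b assume "0 < m" "a \<in> carrier G" "b \<in> carrier G"
    and "mcay_translation G m a = mcay_translation G m b"
  then have "mcay_translation G m a (\<one>, 0) = mcay_translation G m b (\<one>, 0)"
    by simp
  with \<open>0 < m\<close> \<open>a \<in> carrier G\<close> \<open>b \<in> carrier G\<close> show "a = b"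
    by (simp add: mcay_twist_def mcay_verts_def)
qed

lemma bij_betw_mcay_twist:
  assumes \<pi>: "bij_betw \<pi> {..<m} {..<m}" and c: "c \<in> {..<m} \<rightarrow> carrier G"
  shows "bij_betw (mcay_twist G m c \<pi>) (mcay_verts G m) (mcay_verts G m)"
proof -
  let ?V = "mcay_verts G m" and ?\<tau> = "mcay_twist G m c \<pi>"
  have \<tau>: "?\<tau> (g, i) = (c i \<otimes> g, \<pi> i)" if "g \<in> carrier G" "i < m" for g i
    using that by (simp add: mcay_twist_def)
  have \<pi>_less: "\<pi> i < m" if "i < m" for i
    using \<pi> that by (auto dest: bij_betwE)
  have c_closed: "c i \<in> carrier G" if "i < m" for i
    using c that by auto
  have "inj_on ?\<tau> ?V"
  proof (rule inj_onI)
    fix u w assume "u \<in> ?V" "w \<in> ?V" and eq: "?\<tau> u = ?\<tau> w"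
    then obtain g i g' j where u: "u = (g, i)" "g \<in> carrier G" "i < m"
      and w: "w = (g', j)" "g' \<in> carrier G" "j < m"
      by (cases u, cases w) auto
    with eq have "\<pi> i = \<pi> j" "c i \<otimes> g = c j \<otimes> g'"
      by (simp_all add: \<tau>)
    moreover from this have "i = j"
      using \<pi> u w by (auto simp: bij_betw_def inj_on_def)
    ultimately show "u = w"
      using u w c_closed by simp
  qed
  moreover have "?V \<subseteq> ?\<tau> ` ?V"
  proof (clarsimp simp: mcay_verts_def)
    fix g' j assume "g' \<in> carrier G" "j < m"
    moreover obtain i where "i < m" "\<pi> i = j"
      using \<pi> \<open>j < m\<close> by (metis bij_betw_imp_surj_on imageE lessThan_iff)
    ultimately have "(g', j) = ?\<tau> (inv (c i) \<otimes> g', i)" "(inv (c i) \<otimes> g', i) \<in> ?V"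
      using c_closed by (simp_all add: \<tau> m_assoc [symmetric])
    then show "(g', j) \<in> ?\<tau> ` (carrier G \<times> {..<m})"
      unfolding mcay_verts_def by blast
  qed
  moreover have "?\<tau> ` ?V \<subseteq> ?V"
    by (auto simp: \<tau> \<pi>_less c_closed mcay_verts_def)
  ultimately show ?thesis
    unfolding bij_betw_def by blast
qed

lemma l_coset_eq_if_card_le_1:
  assumes "finite (carrier G)" "A \<subseteq> carrier G" "B \<subseteq> carrier G"
    and "card A = card B" "card A \<le> 1"
  shows "\<exists>g\<in>carrier G. B = g <# A"
proof (cases "card A = 0")
  case True
  moreover have "finite A" "finite B"
    using assms(1-3) by (simp_all add: rev_finite_subset)
  ultimately have "A = {}" "B = {}"
    using assms(4) by simp_all
  then show ?thesis
    by (auto simp: l_coset_def)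
next
  case False
  with assms(4,5) have "card A = 1" "card B = 1"
    by simp_all
  then obtain a b where ab: "A = {a}" "B = {b}"
    by (meson card_1_singletonE)
  with assms(2,3) have "a \<in> carrier G" "b \<in> carrier G"
    by simp_all
  then have "B = (b \<otimes> inv a) <# A"
    by (simp add: ab l_coset_def m_assoc)
  with \<open>a \<in> carrier G\<close> \<open>b \<in> carrier G\<close> show ?thesis
    by blast
qed

lemma l_coset_eq_if_card_Diff_le_1:
  assumes fin: "finite (carrier G)" and A: "A \<subseteq> carrier G" and B: "B \<subseteq> carrier G"
    and "card A = card B" and "card (carrier G) \<le> card A + 1"
  shows "\<exists>g\<in>carrier G. B = g <# A"
proof -
  have "card (carrier G - A) = card (carrier G - B)" "card (carrier G - A) \<le> 1"
    using assms by (simp_all add: card_Diff_subset rev_finite_subset)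
  then obtain g where g: "g \<in> carrier G" and eq: "carrier G - B = g <# (carrier G - A)"
    using l_coset_eq_if_card_le_1[OF fin Diff_subset Diff_subset] by metis
  have "B = carrier G - (carrier G - B)"
    by (rule double_diff[OF B subset_refl, symmetric])
  also have "\<dots> = carrier G - (carrier G - (g <# A))"
    by (simp only: eq l_coset_carrier_Diff[OF g A])
  also have "\<dots> = g <# A"
    by (rule double_diff[OF l_coset_subset_G[OF A g] subset_refl])
  finally show ?thesis
    using g by blast
qed

end

context comm_group
begin

lemma mcay_twist_aut:
  assumes T: "\<forall>i<m. \<forall>j<m. T i j \<subseteq> carrier G"
    and \<pi>: "bij_betw \<pi> {..<m} {..<m}" and c: "c \<in> {..<m} \<rightarrow> carrier G"
    and T_twist: "\<And>i j. i < m \<Longrightarrow> j < m \<Longrightarrow> T (\<pi> i) (\<pi> j) = (c j \<otimes> inv (c i)) <# T i j"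
  shows "mcay_twist G m c \<pi> \<in> digraph_auts (mcay_verts G m) (mcay_arcs G m T)"
proof -
  have c_closed: "c i \<in> carrier G" if "i < m" for i
    using c that by auto
  have "(u, w) \<in> mcay_arcs G m T \<longleftrightarrow> (mcay_twist G m c \<pi> u, mcay_twist G m c \<pi> w) \<in> mcay_arcs G m T"
    if uw: "u \<in> mcay_verts G m" "w \<in> mcay_verts G m" for u w
  proof -
    obtain g i g' j where u: "u = (g, i)" "g \<in> carrier G" "i < m"
      and w: "w = (g', j)" "g' \<in> carrier G" "j < m"
      using uw by (auto simp: mcay_verts_def)
    have "(c j \<otimes> g') \<otimes> inv (c i \<otimes> g) = (c j \<otimes> inv (c i)) \<otimes> (g' \<otimes> inv g)"
      using u w c_closed by (simp add: inv_mult m_ac)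
    with u w show ?thesis
      using T c_closed \<pi> bij_betwE[OF \<pi>]
      by (simp add: mcay_twist_def mcay_arcs_iff[OF T] T_twist l_coset_mult_mem_iff)
  qed
  then show ?thesis
    using bij_betw_mcay_twist[OF \<pi> c] by (simp add: digraph_auts_def mcay_twist_def)
qed

lemma mcay_translation_aut:
  assumes "\<forall>i<m. \<forall>j<m. T i j \<subseteq> carrier G" and "h \<in> carrier G"
  shows "mcay_translation G m h \<in> digraph_auts (mcay_verts G m) (mcay_arcs G m T)"
  using assms by (intro mcay_twist_aut) (auto simp: lcos_mult_one)

lemma mcay_translation_hom:
  assumes "\<forall>i<m. \<forall>j<m. T i j \<subseteq> carrier G"
  shows "mcay_translation G m \<in> hom G (Aut_digraph (mcay_verts G m) (mcay_arcs G m T))"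
  using assms by (auto simp: hom_def Aut_digraph_def mcay_translation_aut mcay_translation_mult)

lemma iso_Aut_mcay_iff:
  assumes fin: "finite (carrier G)" and "0 < m" and T: "\<forall>i<m. \<forall>j<m. T i j \<subseteq> carrier G"
  shows "G \<cong> Aut_digraph (mcay_verts G m) (mcay_arcs G m T)
    \<longleftrightarrow> digraph_auts (mcay_verts G m) (mcay_arcs G m T) \<subseteq> mcay_translation G m ` carrier G"
    (is "_ \<longleftrightarrow> ?Auts \<subseteq> ?Transl")
proof
  have Transl: "?Transl \<subseteq> ?Auts" "card ?Transl = card (carrier G)"
    using mcay_translation_aut[OF T] card_image[OF inj_on_mcay_translation[OF \<open>0 < m\<close>]]
    by auto
  {
    assume "G \<cong> Aut_digraph (mcay_verts G m) (mcay_arcs G m T)"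
    then have "card ?Auts = card (carrier G)"
      by (auto simp: is_iso_def iso_def Aut_digraph_def bij_betw_same_card)
    moreover have "finite ?Auts"
      using fin by (simp add: finite_digraph_auts mcay_verts_def)
    ultimately show "?Auts \<subseteq> ?Transl"
      using Transl card_subset_eq by metis
  }
  {
    assume "?Auts \<subseteq> ?Transl"
    then have "bij_betw (mcay_translation G m) (carrier G) ?Auts"
      using Transl inj_on_mcay_translation[OF \<open>0 < m\<close>] by (auto simp: bij_betw_def)
    then show "G \<cong> Aut_digraph (mcay_verts G m) (mcay_arcs G m T)"
      using mcay_translation_hom[OF T] by (auto simp: Aut_digraph_def intro!: is_isoI isoI)
  }
qed

lemma not_iso_Aut_mcay_if_twist:
  assumes "finite (carrier G)" and "0 < m" and T: "\<forall>i<m. \<forall>j<m. T i j \<subseteq> carrier G"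
    and "mcay_twist G m c \<pi> \<in> digraph_auts (mcay_verts G m) (mcay_arcs G m T)" and "\<pi> 0 \<noteq> 0"
  shows "\<not> G \<cong> Aut_digraph (mcay_verts G m) (mcay_arcs G m T)"
proof
  assume "G \<cong> Aut_digraph (mcay_verts G m) (mcay_arcs G m T)"
  with assms obtain h where "h \<in> carrier G" "mcay_twist G m c \<pi> = mcay_translation G m h"
    using iso_Aut_mcay_iff by blast
  then have "mcay_twist G m c \<pi> (\<one>, 0) = mcay_translation G m h (\<one>, 0)"
    by simp
  with \<open>0 < m\<close> \<open>\<pi> 0 \<noteq> 0\<close> show False
    by (simp add: mcay_twist_def)
qed


section \<open>Small cases without an m-PDR of valency 3\<close>

lemma mcay_swap_aut_two_layers:
  assumes T: "\<forall>i<2. \<forall>j<2. T i j \<subseteq> carrier G" and diag: "\<forall>i<2. T i i = {}"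
    and g: "g \<in> carrier G" and T10: "T 1 0 = g <# T 0 1"
  shows "mcay_twist G 2 (\<lambda>i. if i = 0 then \<one> else g) (\<lambda>i. 1 - i)
    \<in> digraph_auts (mcay_verts G 2) (mcay_arcs G 2 T)"
proof (rule mcay_twist_aut[OF T])
  show "bij_betw (\<lambda>i. 1 - i) {..<2} {..<2::nat}"
    by (rule bij_betwI[where g = "\<lambda>i. 1 - i"]) auto
  show "(\<lambda>i. if i = 0 then \<one> else g) \<in> {..<2} \<rightarrow> carrier G"
    using g by simp
  have T01: "T 0 1 \<subseteq> carrier G"
    using T by simp
  have "inv g <# T 1 0 = inv g <# (g <# T 0 1)"
    by (simp only: T10)
  also have "\<dots> = T 0 1"
    using T01 g by (simp add: lcos_m_assoc lcos_mult_one)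
  finally have T01_eq: "T 0 1 = inv g <# T 1 0" ..
  fix i j :: nat assume "i < 2" "j < 2"
  then consider "i = 0" "j = 0" | "i = 0" "j = 1" | "i = 1" "j = 0" | "i = 1" "j = 1"
    by linarith
  then show "T (1 - i) (1 - j) =
    ((if j = 0 then \<one> else g) \<otimes> inv (if i = 0 then \<one> else g)) <# T i j"
    using diag g T10 T01_eq by cases (simp_all add: l_coset_def)
qed

lemma not_admits_mPDR_two_layers:
  assumes fin: "finite (carrier G)" and small: "card (carrier G) < 5"
  shows "\<not> admits_mPDR G 2 3"
proof
  assume "admits_mPDR G 2 3"
  then obtain T where T: "\<forall>i<2. \<forall>j<2. T i j \<subseteq> carrier G" and diag: "\<forall>i<2. T i i = {}"
    and reg: "regular_digraph (mcay_verts G 2) (mcay_arcs G 2 T) 3"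
    and iso: "G \<cong> Aut_digraph (mcay_verts G 2) (mcay_arcs G 2 T)"
    unfolding admits_mPDR_def by blast
  have T01: "T 0 1 \<subseteq> carrier G" and T10: "T 1 0 \<subseteq> carrier G"
    using T by simp_all
  have "T 0 0 = {}" "T 1 1 = {}"
    using diag by simp_all
  then have "card (T 0 1) = 3" "card (T 1 0) = 3"
    using regular_mcay_degree_sums(1)[OF fin T reg, of 0] regular_mcay_degree_sums(1)[OF fin T reg, of 1]
    by (simp_all add: numeral_2_eq_2)
  then obtain g where "g \<in> carrier G" "T 1 0 = g <# T 0 1"
    using l_coset_eq_if_card_Diff_le_1[OF fin T01 T10] small by auto
  note twist = mcay_swap_aut_two_layers[OF T diag this]
  have "\<not> G \<cong> Aut_digraph (mcay_verts G 2) (mcay_arcs G 2 T)"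
    by (rule not_iso_Aut_mcay_if_twist[OF fin _ T twist]) simp_all
  with iso show False
    by contradiction
qed

lemma mcay_rotation_aut_three_layers:
  assumes T: "\<forall>i<3. \<forall>j<3. T i j \<subseteq> carrier G" and diag: "\<forall>i<3. T i i = {}"
    and k: "k = 1 \<or> k = 2"
    and single: "\<And>i. i < 3 \<Longrightarrow> c i \<in> carrier G \<and> T i ((i + k) mod 3) = {c i}"
    and full: "\<And>i. i < 3 \<Longrightarrow> T ((i + k) mod 3) i = carrier G"
  shows "mcay_twist G 3 c (\<lambda>i. (i + k) mod 3) \<in> digraph_auts (mcay_verts G 3) (mcay_arcs G 3 T)"
proof (rule mcay_twist_aut[OF T])
  let ?\<pi> = "\<lambda>i. (i + k) mod 3"
  have "inj_on ?\<pi> {..<3}"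
    by (auto intro!: inj_onI simp: add.commute[of _ k] nat_mod_eq_iff) presburger
  moreover have "?\<pi> ` {..<3} \<subseteq> {..<3}"
    by auto
  ultimately show "bij_betw ?\<pi> {..<3} {..<3}"
    by (simp add: bij_betw_def endo_inj_surj)
  show "c \<in> {..<3} \<rightarrow> carrier G"
    using single by simp
  fix i j :: nat assume i: "i < 3" and j: "j < 3"
  have "i \<in> {0, 1, 2}" "j \<in> {0, 1, 2}"
    using i j by auto
  with k have "i = j \<or> j = ?\<pi> i \<or> i = ?\<pi> j"
    by auto
  then consider "i = j" | "j = ?\<pi> i" | "i = ?\<pi> j"
    by blast
  then show "T (?\<pi> i) (?\<pi> j) = (c j \<otimes> inv (c i)) <# T i j"
  proof cases
    case 1
    with i diag show ?thesis
      by (simp add: l_coset_def)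
  next
    case 2
    with i single[of i] single[of "?\<pi> i"] show ?thesis
      by (simp add: l_coset_def m_assoc)
  next
    case 3
    with j single[of j] single[of "?\<pi> j"] full[of j] full[of "?\<pi> j"] show ?thesis
      by (simp add: coset_join3[OF _ subgroup_self])
  qed
qed

end

lemma three_layer_degree_pattern:
  fixes a :: "nat \<Rightarrow> nat \<Rightarrow> nat"
  assumes diag: "\<And>i. i < 3 \<Longrightarrow> a i i = 0" and le: "\<And>i j. i < 3 \<Longrightarrow> j < 3 \<Longrightarrow> a i j \<le> 2"
    and rows: "\<And>i. i < 3 \<Longrightarrow> (\<Sum>j<3. a i j) = 3" and cols: "\<And>j. j < 3 \<Longrightarrow> (\<Sum>i<3. a i j) = 3"
  obtains k where "k = 1 \<or> k = 2"
    and "\<And>i. i < 3 \<Longrightarrow> a i ((i + k) mod 3) = 1 \<and> a ((i + k) mod 3) i = 2"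
proof -
  have "a 0 0 = 0" "a 1 1 = 0" "a 2 2 = 0" "{..<3::nat} = {0, 1, 2}"
    using diag by auto
  then have sums:
    "a 0 1 + a 0 2 = 3" "a 1 0 + a 1 2 = 3" "a 2 0 + a 2 1 = 3"
    "a 1 0 + a 2 0 = 3" "a 0 1 + a 2 1 = 3" "a 0 2 + a 1 2 = 3"
    using rows[of 0] rows[of 1] rows[of 2] cols[of 0] cols[of 1] cols[of 2] by simp_all
  define k :: nat where "k = (if a 0 1 = 1 then 1 else 2)"
  have "k = 1 \<or> k = 2"
    by (simp add: k_def)
  moreover have "a i ((i + k) mod 3) = 1 \<and> a ((i + k) mod 3) i = 2" if "i < 3" for i
  proof -
    from that consider "i = 0" | "i = 1" | "i = 2"
      by linarith
    then show ?thesis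
      using sums le[of 0 1] le[of 0 2] le[of 1 0] le[of 1 2] le[of 2 0] le[of 2 1]
      by cases (auto simp: k_def numeral_2_eq_2)
  qed
  ultimately show ?thesis
    by (rule that)
qed

lemma (in comm_group) not_admits_mPDR_three_layers:
  assumes fin: "finite (carrier G)" and two: "card (carrier G) = 2"
  shows "\<not> admits_mPDR G 3 3"
proof
  assume "admits_mPDR G 3 3"
  then obtain T where T: "\<forall>i<3. \<forall>j<3. T i j \<subseteq> carrier G" and diag: "\<forall>i<3. T i i = {}"
    and reg: "regular_digraph (mcay_verts G 3) (mcay_arcs G 3 T) 3"
    and iso: "G \<cong> Aut_digraph (mcay_verts G 3) (mcay_arcs G 3 T)"
    unfolding admits_mPDR_def by blast
  have T_sub: "T i j \<subseteq> carrier G" if "i < 3" "j < 3" for i j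
    using T that by blast
  have "card (T i i) = 0" if "i < 3" for i
    using diag that by simp
  moreover have "card (T i j) \<le> 2" if "i < 3" "j < 3" for i j
    using card_mono[OF fin T_sub[OF that]] two by simp
  ultimately obtain k where k: "k = 1 \<or> k = 2"
    and cards: "\<And>i. i < 3 \<Longrightarrow> card (T i ((i + k) mod 3)) = 1 \<and> card (T ((i + k) mod 3) i) = 2"
    using three_layer_degree_pattern[of "\<lambda>i j. card (T i j)"] regular_mcay_degree_sums[OF fin T reg]
    by blast
  have "\<exists>a. a \<in> carrier G \<and> T i ((i + k) mod 3) = {a}" if i: "i < 3" for i
  proof -
    obtain a where "T i ((i + k) mod 3) = {a}"
      using cards[OF i] card_1_singletonE by blast
    with T_sub[OF i, of "(i + k) mod 3"] show ?thesis
      by auto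
  qed
  then obtain c where c: "\<And>i. i < 3 \<Longrightarrow> c i \<in> carrier G \<and> T i ((i + k) mod 3) = {c i}"
    by metis
  have full: "T ((i + k) mod 3) i = carrier G" if "i < 3" for i
    using card_subset_eq[OF fin T_sub] cards[OF that] two that by simp
  note twist = mcay_rotation_aut_three_layers[OF T diag k c full]
  have "\<not> G \<cong> Aut_digraph (mcay_verts G 3) (mcay_arcs G 3 T)"
    by (rule not_iso_Aut_mcay_if_twist[OF fin _ T twist]) (use k in auto)
  with iso show False
    by contradiction
qed

section \<open>Spiral digraphs over cyclic groups\<close>

lemma add_div_eq_mod_add_div: "(p + d) div m = (p mod m + d) div m + p div (m::nat)"
  by (metis (no_types, opaque_lifting) add.assoc add.commute add_0 bits_mod_div_trivial div_add1_eq
      mod_mod_trivial)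

lemma (in group) comm_group_if_generate_singleton:
  assumes "x \<in> carrier G" and "generate G {x} = carrier G"
  shows "comm_group G"
proof (rule cyclic_imp_abelian_group)
  have "carrier G = range (\<lambda>k::int. x [^] k)"
    using assms by (auto simp: generate_pow)
  with assms(1) show "cyclic_group G"
    unfolding cyclic_group by blast
qed

locale cyclic_mcay = comm_group G for G (structure) +
  fixes x :: 'a and m :: nat
  assumes finite_carrier: "finite (carrier G)" and x_closed: "x \<in> carrier G"
    and generate_x: "generate G {x} = carrier G" and m_pos: "0 < m"
begin

abbreviation n where "n \<equiv> ord x"

abbreviation N where "N \<equiv> m * n"

lemma ord_x_eq_card: "n = card (carrier G)"
  using generate_pow_card[OF x_closed] generate_x by simp

lemma ord_x_pos: "0 < n"
  using ord_ge_1[OF finite_carrier x_closed] by simp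

lemma N_pos: "0 < N"
  using m_pos ord_x_pos by simp

lemma two_le_ord_x: "carrier G \<noteq> {\<one>} \<Longrightarrow> 2 \<le> n"
proof -
  assume "carrier G \<noteq> {\<one>}"
  then obtain y where "y \<in> carrier G" "y \<noteq> \<one>"
    by blast
  then have "card {\<one>, y} \<le> card (carrier G)"
    using finite_carrier by (intro card_mono) auto
  with \<open>y \<noteq> \<one>\<close> show ?thesis
    by (simp add: ord_x_eq_card)
qed

lemma pow_x_eq_iff: "x [^] (a::nat) = x [^] (b::nat) \<longleftrightarrow> a mod n = b mod n"
proof -
  have "x [^] a = x [^] b \<longleftrightarrow> int n dvd int b - int a"
    using int_pow_eq[OF x_closed, of "int a" "int b"] by (simp add: int_pow_int)
  also have "\<dots> \<longleftrightarrow> a mod n = b mod n"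
    by (metis mod_eq_dvd_iff of_nat_eq_iff zmod_int dvd_diff_commute)
  finally show ?thesis .
qed

lemma carrier_eq_pow_x: "g \<in> carrier G \<Longrightarrow> \<exists>k::nat. g = x [^] k"
  using generate_pow_on_finite_carrier[OF finite_carrier x_closed] generate_x by auto

definition spiral :: "nat \<Rightarrow> 'a \<times> nat"
  where "spiral p = (x [^] (p div m), p mod m)"

lemma spiral_in_verts [simp]: "spiral p \<in> mcay_verts G m"
  using x_closed m_pos by (simp add: spiral_def)

lemma spiral_eq_iff: "spiral p = spiral q \<longleftrightarrow> p mod N = q mod N"
  by (simp add: spiral_def pow_x_eq_iff mod_mult2_eq)
    (metis add_diff_cancel_right' mod_mult2_eq mod_mod_trivial mod_mult_self4 mult_left_cancel m_pos
      less_not_refl)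

lemma spiral_add_eq_iff: "spiral (p + a) = spiral (p + b) \<longleftrightarrow> a mod N = b mod N"
  by (simp add: spiral_eq_iff nat_mod_eq_iff)

lemma spiral_add_cong: "spiral a = spiral b \<Longrightarrow> spiral (a + c) = spiral (b + c)"
  unfolding spiral_eq_iff by (erule mod_add_cong) (rule refl)

lemma spiral_add_eq_self_iff: "spiral (p + a) = spiral p \<longleftrightarrow> N dvd a"
  using spiral_add_eq_iff[of p a 0] by (simp add: mod_eq_0_iff_dvd)

lemma verts_eq_spiral: "v \<in> mcay_verts G m \<Longrightarrow> \<exists>p. v = spiral p"
proof -
  assume "v \<in> mcay_verts G m"
  then obtain g i where "v = (g, i)" "g \<in> carrier G" "i < m"
    by (auto simp: mcay_verts_def)
  moreover obtain k where "g = x [^] (k::nat)"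
    using carrier_eq_pow_x \<open>g \<in> carrier G\<close> by blast
  ultimately have "v = spiral (k * m + i)"
    by (simp add: spiral_def)
  then show ?thesis ..
qed

lemma translation_spiral: "mcay_translation G m (x [^] k) (spiral p) = spiral (p + k * m)"
  using m_pos x_closed by (simp add: mcay_twist_def spiral_def nat_pow_mult add.commute)

definition spiral_conn :: "(nat \<Rightarrow> nat set) \<Rightarrow> nat \<Rightarrow> nat \<Rightarrow> 'a set"
  where "spiral_conn D i j = {x [^] ((i + d) div m) | d. d \<in> D i \<and> (i + d) mod m = j}"

lemma spiral_conn_subset: "\<forall>i<m. \<forall>j<m. spiral_conn D i j \<subseteq> carrier G"
  using x_closed by (auto simp: spiral_conn_def)

lemma spiral_add:
  "spiral (p + d) = (x [^] ((p mod m + d) div m) \<otimes> x [^] (p div m), (p mod m + d) mod m)"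
proof -
  have "(p + d) div m = (p mod m + d) div m + p div m"
    by (rule add_div_eq_mod_add_div)
  moreover have "(p mod m + d) mod m = (p + d) mod m"
    by (rule mod_add_left_eq)
  ultimately show ?thesis
    using x_closed unfolding spiral_def by (simp add: nat_pow_mult add.commute)
qed

lemma spiral_conn_arcs_iff:
  "(spiral p, w) \<in> mcay_arcs G m (spiral_conn D) \<longleftrightarrow> (\<exists>d\<in>D (p mod m). w = spiral (p + d))"
proof
  assume "(spiral p, w) \<in> mcay_arcs G m (spiral_conn D)"
  then obtain j t where "w = (t \<otimes> x [^] (p div m), j)" "t \<in> spiral_conn D (p mod m) j"
    by (auto simp: mcay_arcs_def spiral_def)
  then show "\<exists>d\<in>D (p mod m). w = spiral (p + d)"
    by (auto simp: spiral_conn_def spiral_add)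
next
  assume "\<exists>d\<in>D (p mod m). w = spiral (p + d)"
  then obtain d where "d \<in> D (p mod m)" "w = spiral (p + d)" ..
  moreover have "p mod m < m" "(p mod m + d) mod m < m" "x [^] (p div m) \<in> carrier G"
    using m_pos x_closed by simp_all
  ultimately show "(spiral p, w) \<in> mcay_arcs G m (spiral_conn D)"
    unfolding mcay_arcs_def spiral_conn_def spiral_add by (auto simp: spiral_def)
qed

end

(* D i is the set of offsets d of the arcs p -> p + d leaving a vertex p of layer i = p mod m;
   the last two conditions on D make p -> p + 1 the only arc without a reverse arc, and E is a
   set of offsets found in layer 0 only. *)
locale spiral_offsets =
  fixes m N :: nat and D :: "nat \<Rightarrow> nat set" and E :: "nat set"
  assumes D_subset: "i < m \<Longrightarrow> D i \<subseteq> {..<N}"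
    and card_D: "i < m \<Longrightarrow> card (D i) = 3"
    and one_in_D: "i < m \<Longrightarrow> 1 \<in> D i"
    and D_not_dvd: "i < m \<Longrightarrow> d \<in> D i \<Longrightarrow> \<not> m dvd d"
    and N_minus_one_notin_D: "i < m \<Longrightarrow> N - 1 \<notin> D i"
    and N_minus_in_D: "i < m \<Longrightarrow> d \<in> D i \<Longrightarrow> d \<noteq> 1 \<Longrightarrow> N - d \<in> D ((i + d) mod m)"
    and E_subset_D_iff: "i < m \<Longrightarrow> E \<subseteq> D i \<longleftrightarrow> i = 0"

locale spiral_design = cyclic_mcay G x m + spiral_offsets m "m * group.ord G x" D E
  for G (structure) and x m D E
begin

abbreviation arcs where "arcs \<equiv> mcay_arcs G m (spiral_conn D)"

lemma D_less: "d \<in> D (p mod m) \<Longrightarrow> d < N"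
  using D_subset[of "p mod m"] m_pos by auto

lemma spiral_conn_diag: "i < m \<Longrightarrow> spiral_conn D i i = {}"
  using D_not_dvd mod_eq_dvd_iff_nat[of i "i + d" m for d] by (fastforce simp: spiral_conn_def)

lemma one_way_arc_iff:
  "(spiral p, w) \<in> arcs \<and> (w, spiral p) \<notin> arcs \<longleftrightarrow> w = spiral (Suc p)"
proof
  assume "(spiral p, w) \<in> arcs \<and> (w, spiral p) \<notin> arcs"
  then obtain d where d: "d \<in> D (p mod m)" "w = spiral (p + d)"
    and no_back: "(spiral (p + d), spiral p) \<notin> arcs"
    by (auto simp: spiral_conn_arcs_iff)
  have "d = 1"
  proof (rule ccontr)
    assume "d \<noteq> 1"
    then have "N - d \<in> D ((p + d) mod m)"
      using N_minus_in_D[OF _ d(1)] m_pos by (simp add: mod_add_left_eq)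
    moreover have "spiral (p + d + (N - d)) = spiral p"
      using D_less[OF d(1)] spiral_add_eq_self_iff[of p N] by simp
    ultimately have "(spiral (p + d), spiral p) \<in> arcs"
      unfolding spiral_conn_arcs_iff by (intro bexI[of _ "N - d"]) auto
    with no_back show False ..
  qed
  with d show "w = spiral (Suc p)"
    by simp
next
  assume w: "w = spiral (Suc p)"
  have "(w, spiral p) \<notin> arcs"
  proof
    assume "(w, spiral p) \<in> arcs"
    then obtain d where d: "d \<in> D (Suc p mod m)" "spiral (p + Suc d) = spiral p"
      using w by (auto simp: spiral_conn_arcs_iff)
    then have "N dvd Suc d"
      using spiral_add_eq_self_iff[of p "Suc d"] by simp
    moreover have "d < N"
      by (rule D_less[OF d(1)])
    ultimately have "d = N - 1"
      using dvd_imp_le[of N "Suc d"] by simp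
    with d(1) N_minus_one_notin_D m_pos show False
      by simp
  qed
  moreover have "(spiral p, w) \<in> arcs"
    unfolding w spiral_conn_arcs_iff using one_in_D[of "p mod m"] m_pos
    by (intro bexI[of _ 1]) simp_all
  ultimately show "(spiral p, w) \<in> arcs \<and> (w, spiral p) \<notin> arcs"
    by simp
qed

lemma card_out_neighbours_spiral: "card {w. (spiral p, w) \<in> arcs} = 3"
proof -
  have "{w. (spiral p, w) \<in> arcs} = (\<lambda>d. spiral (p + d)) ` D (p mod m)"
    by (auto simp: spiral_conn_arcs_iff)
  moreover have "inj_on (\<lambda>d. spiral (p + d)) (D (p mod m))"
    using D_less by (auto intro!: inj_onI simp: spiral_add_eq_iff)
  ultimately show ?thesis
    using card_D[of "p mod m"] m_pos by (simp add: card_image)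
qed

lemma in_neighbours_spiral:
  "{u. (u, spiral p) \<in> arcs} =
    insert (spiral (p + (N - 1))) ({w. (spiral p, w) \<in> arcs} - {spiral (Suc p)})"
    (is "_ = insert ?pred (?out - _)")
proof (intro equalityI subsetI)
  have pred_succ: "spiral (Suc (p + (N - 1))) = spiral p"
    using N_pos spiral_add_eq_self_iff[of p N] by simp
  {
    fix u assume "u \<in> insert ?pred (?out - {spiral (Suc p)})"
    then show "u \<in> {u. (u, spiral p) \<in> arcs}"
      using one_way_arc_iff[of p u] one_way_arc_iff[of "p + (N - 1)" "spiral p"] pred_succ by auto
  }
  fix u assume "u \<in> {u. (u, spiral p) \<in> arcs}"
  then have arc: "(u, spiral p) \<in> arcs"
    by simp
  then obtain r where r: "u = spiral r"
    using mcay_arcs_in_verts(1)[OF spiral_conn_subset] verts_eq_spiral by blast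
  show "u \<in> insert ?pred (?out - {spiral (Suc p)})"
  proof (cases "(spiral p, u) \<in> arcs")
    case True
    moreover have "u \<noteq> spiral (Suc p)"
      using arc one_way_arc_iff[of p u] by blast
    ultimately show ?thesis
      by simp
  next
    case False
    with arc r have "spiral (Suc r) = spiral p"
      using one_way_arc_iff[of r "spiral p"] by simp
    then have "spiral (Suc r + (N - 1)) = ?pred"
      by (rule spiral_add_cong)
    moreover have "spiral (Suc r + (N - 1)) = u"
      using r N_pos spiral_add_eq_self_iff[of r N] by simp
    ultimately show ?thesis
      by simp
  qed
qed

lemma card_in_neighbours_spiral: "card {u. (u, spiral p) \<in> arcs} = 3"
proof -
  let ?out = "{w. (spiral p, w) \<in> arcs}"
  have "spiral (Suc (p + (N - 1))) = spiral p"
    using N_pos spiral_add_eq_self_iff[of p N] by simp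
  then have "spiral (p + (N - 1)) \<notin> ?out"
    using one_way_arc_iff[of "p + (N - 1)" "spiral p"] by simp
  moreover have "spiral (Suc p) \<in> ?out" "finite ?out"
    using one_way_arc_iff[of p "spiral (Suc p)"] card_out_neighbours_spiral[of p]
    by (auto intro: card_ge_0_finite)
  ultimately show ?thesis
    using card_out_neighbours_spiral[of p] by (simp add: in_neighbours_spiral)
qed

lemma regular_spiral_arcs: "regular_digraph (mcay_verts G m) arcs 3"
  unfolding regular_digraph_def
  using verts_eq_spiral card_out_neighbours_spiral card_in_neighbours_spiral by blast

lemma aut_spiral_shift:
  assumes \<tau>: "\<tau> \<in> digraph_auts (mcay_verts G m) arcs" and q: "\<tau> (spiral 0) = spiral q"
  shows "\<tau> (spiral p) = spiral (q + p)"
proof (induction p)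
  case 0
  show ?case
    using q by simp
next
  case (Suc p)
  have "(spiral p, spiral (Suc p)) \<in> arcs \<and> (spiral (Suc p), spiral p) \<notin> arcs"
    using one_way_arc_iff by simp
  then have "(\<tau> (spiral p), \<tau> (spiral (Suc p))) \<in> arcs \<and> (\<tau> (spiral (Suc p)), \<tau> (spiral p)) \<notin> arcs"
    using \<tau> by (simp add: digraph_auts_def)
  then show ?case
    using one_way_arc_iff[of "q + p"] Suc.IH by simp
qed

lemma aut_spiral_layer_zero:
  assumes \<tau>: "\<tau> \<in> digraph_auts (mcay_verts G m) arcs" and q: "\<tau> (spiral 0) = spiral q"
  shows "q mod m = 0"
proof -
  have "E \<subseteq> D (q mod m)"
  proof
    fix e assume "e \<in> E"
    then have e: "e \<in> D 0"
      using E_subset_D_iff[of 0] m_pos by auto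
    then have "(spiral 0, spiral (0 + e)) \<in> arcs"
      unfolding spiral_conn_arcs_iff by auto
    then have "(\<tau> (spiral 0), \<tau> (spiral e)) \<in> arcs"
      using \<tau> by (simp add: digraph_auts_def)
    then have "(spiral q, spiral (q + e)) \<in> arcs"
      using aut_spiral_shift[OF \<tau> q] q by simp
    then obtain d where d: "d \<in> D (q mod m)" "spiral (q + e) = spiral (q + d)"
      unfolding spiral_conn_arcs_iff by blast
    then have "e = d"
      using D_less[OF d(1)] D_less[of e 0] e by (simp add: spiral_add_eq_iff)
    with d show "e \<in> D (q mod m)"
      by simp
  qed
  then show ?thesis
    using E_subset_D_iff[of "q mod m"] m_pos by simp
qed

lemma aut_is_translation:
  assumes \<tau>: "\<tau> \<in> digraph_auts (mcay_verts G m) arcs"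
  shows "\<tau> \<in> mcay_translation G m ` carrier G"
proof -
  have "\<tau> (spiral 0) \<in> mcay_verts G m"
    using \<tau> by (auto simp: digraph_auts_def dest: bij_betwE)
  then obtain q where q: "\<tau> (spiral 0) = spiral q"
    using verts_eq_spiral by blast
  then have "q div m * m = q"
    using aut_spiral_layer_zero[OF \<tau>] div_mult_mod_eq[of q m] by simp
  have "\<tau> v = mcay_translation G m (x [^] (q div m)) v" for v
  proof (cases "v \<in> mcay_verts G m")
    case True
    then obtain p where "v = spiral p"
      using verts_eq_spiral by blast
    with \<open>q div m * m = q\<close> show ?thesis
      using aut_spiral_shift[OF \<tau> q] by (simp add: translation_spiral add.commute)
  next
    case False
    have "\<tau> \<in> extensional (mcay_verts G m)"
      using \<tau> by (simp add: digraph_auts_def)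
    with False show ?thesis
      by (simp add: mcay_twist_def extensional_arb[OF _ False])
  qed
  then have "\<tau> = mcay_translation G m (x [^] (q div m))"
    by (rule ext)
  then show ?thesis
    using x_closed by simp
qed

theorem admits_mPDR: "admits_mPDR G m 3"
  unfolding admits_mPDR_def
proof (intro exI conjI)
  show "\<forall>i<m. \<forall>j<m. spiral_conn D i j \<subseteq> carrier G"
    by (rule spiral_conn_subset)
  show "\<forall>i<m. spiral_conn D i i = {}"
    using spiral_conn_diag by blast
  show "regular_digraph (mcay_verts G m) arcs 3"
    by (rule regular_spiral_arcs)
  show "G \<cong> Aut_digraph (mcay_verts G m) arcs"
    using iso_Aut_mcay_iff[OF finite_carrier m_pos spiral_conn_subset] aut_is_translation by blast
qed

end

section \<open>Offset sets\<close>

lemma card_3_distinct: "\<lbrakk>a \<noteq> b; a \<noteq> c; b \<noteq> c\<rbrakk> \<Longrightarrow> card {a, b, c} = 3"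
  by simp

lemma spiral_offsets_two_layers:
  assumes "5 \<le> n"
  shows "spiral_offsets 2 (2 * n) (\<lambda>i. if i = 0 then {1, 3, 5} else {1, 2 * n - 3, 2 * n - 5}) {3}"
  using assms by unfold_locales (auto simp: less_2_cases_iff card_insert_if; presburger)+

definition offsets_many_layers :: "nat \<Rightarrow> nat \<Rightarrow> nat \<Rightarrow> nat set" where
  "offsets_many_layers m N i =
     {1, if i = m - 1 then N - m + 1 else m + 1, if i = 0 then m - 1 else N - m - 1}"

lemma offsets_many_layers_reverse:
  assumes "3 \<le> m" "3 * m \<le> N" "m dvd N" and i: "i < m"
    and d: "d \<in> offsets_many_layers m N i" "d \<noteq> 1"
  shows "N - d \<in> offsets_many_layers m N ((i + d) mod m)"
proof -
  have "m dvd N - m"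
    using assms by (simp add: dvd_diff_nat)
  from d consider "i \<noteq> m - 1" "d = m + 1" | "i = m - 1" "d = N - m + 1"
    | "i = 0" "d = m - 1" | "i \<noteq> 0" "d = N - m - 1"
    by (auto simp: offsets_many_layers_def split: if_splits)
  then show ?thesis
  proof cases
    case 1
    then have "(i + d) mod m = i + 1"
      using i by (intro mod_nat_eqI) auto
    with 1 assms show ?thesis
      by (simp add: offsets_many_layers_def)
  next
    case 2
    then have "(i + d) mod m = 0"
      using assms by (intro mod_nat_eqI) auto
    with 2 assms show ?thesis
      by (simp add: offsets_many_layers_def)
  next
    case 3
    then have "(i + d) mod m = m - 1" "N - d = N - m + 1"
      using assms by (auto intro: mod_nat_eqI)
    then show ?thesis
      by (simp add: offsets_many_layers_def)
  next
    case 4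
    then have "(i + d) mod m = i - 1"
      using assms \<open>m dvd N - m\<close> by (intro mod_nat_eqI) auto
    with 4 assms show ?thesis
      by (auto simp: offsets_many_layers_def)
  qed
qed

lemma spiral_offsets_many_layers:
  assumes "3 \<le> m" "3 * m \<le> N" "m dvd N"
  shows "spiral_offsets m N (offsets_many_layers m N) {m - 1}"
proof
  fix i assume i: "i < m"
  show "offsets_many_layers m N i \<subseteq> {..<N}"
    using assms by (auto simp: offsets_many_layers_def)
  show "card (offsets_many_layers m N i) = 3"
    using assms by (auto simp: offsets_many_layers_def card_insert_if)
  show "1 \<in> offsets_many_layers m N i"
    by (simp add: offsets_many_layers_def)
  show "N - 1 \<notin> offsets_many_layers m N i"
    using assms by (auto simp: offsets_many_layers_def)
  show "{m - 1} \<subseteq> offsets_many_layers m N i \<longleftrightarrow> i = 0"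
    using assms by (auto simp: offsets_many_layers_def)
  show "N - d \<in> offsets_many_layers m N ((i + d) mod m)"
    if "d \<in> offsets_many_layers m N i" "d \<noteq> 1" for d
    using assms i that by (rule offsets_many_layers_reverse)
  show "\<not> m dvd d" if d: "d \<in> offsets_many_layers m N i" for d
  proof -
    have "m dvd N - m" "m dvd N - 2 * m"
      using assms by (simp_all add: dvd_diff_nat)
    then have mods: "(m + 1) mod m = 1" "(N - m + 1) mod m = 1" "(m - 1) mod m = m - 1"
      "(N - m - 1) mod m = m - 1"
      using assms by (auto intro!: mod_nat_eqI)
    from d consider "d = 1" | "d = m + 1" | "d = N - m + 1" | "d = m - 1" | "d = N - m - 1"
      by (auto simp: offsets_many_layers_def split: if_splits)
    then have "d mod m = 1 \<or> d mod m = m - 1"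
      using mods assms by cases simp_all
    then show ?thesis
      using assms by (auto simp: dvd_eq_mod_eq_0)
  qed
qed

definition offsets_order_two :: "nat \<Rightarrow> nat \<Rightarrow> nat set" where
  "offsets_order_two m i =
     (if i = 0 then {1, 2, m - 1} else if i = 1 then {1, 2, m + 1}
      else if i = 2 then {1, m - 1, 2 * m - 2} else if i = 3 then {1, m + 1, 2 * m - 2}
      else {1, m - 1, m + 1})"

lemma offsets_order_two_reverse_generic:
  assumes m: "4 \<le> m" and i: "4 \<le> i" "i < m" and d: "d = m - 1 \<or> d = m + 1"
  shows "2 * m - d \<in> offsets_order_two m ((i + d) mod m)"
  using d
proof
  assume "d = m - 1"
  moreover from this have "(i + d) mod m = i - 1"
    using m i by (intro mod_nat_eqI) auto
  ultimately show ?thesis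
    using m i by (auto simp: offsets_order_two_def)
next
  assume "d = m + 1"
  then have "i + d = (i + 1) + m"
    by simp
  then have "(i + d) mod m = (i + 1) mod m"
    by (simp only: mod_add_self2)
  with \<open>d = m + 1\<close> m i show ?thesis
    by (cases "i + 1 = m") (simp_all add: offsets_order_two_def)
qed

lemma offsets_order_two_reverse:
  assumes m: "4 \<le> m" and "i < m" and "d \<in> offsets_order_two m i" "d \<noteq> 1"
  shows "2 * m - d \<in> offsets_order_two m ((i + d) mod m)"
proof -
  from assms consider "i = 0" "d = 2" | "i = 0" "d = m - 1" | "i = 1" "d = 2" | "i = 1" "d = m + 1"
    | "i = 2" "d = m - 1" | "i = 2" "d = 2 * m - 2" | "i = 3" "d = m + 1" | "i = 3" "d = 2 * m - 2"
    | "4 \<le> i"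
    by (auto simp: offsets_order_two_def split: if_splits)
  then show ?thesis
  proof cases
    case 4
    then have "(i + d) mod m = 2"
      using m by (intro mod_nat_eqI) auto
    with 4 m show ?thesis
      by (simp add: offsets_order_two_def)
  next
    case 5
    then have "(i + d) mod m = 1"
      using m by (intro mod_nat_eqI) auto
    with 5 m show ?thesis
      by (simp add: offsets_order_two_def)
  next
    case 6
    then have "i + d = 2 * m"
      using m by simp
    then have "(i + d) mod m = 0"
      by simp
    with 6 m show ?thesis
      by (simp add: offsets_order_two_def)
  next
    case 7
    then have "(i + d) mod m = 4 mod m"
      using m by (simp add: mod_add_self2)
    with 7 m show ?thesis
      by (cases "m = 4") (simp_all add: offsets_order_two_def)
  next
    case 8
    then have "(i + d) mod m = 1"
      using m by (intro mod_nat_eqI) auto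
    with 8 m show ?thesis
      by (simp add: offsets_order_two_def)
  next
    case 9
    with assms show ?thesis
      by (intro offsets_order_two_reverse_generic) (auto simp: offsets_order_two_def)
  qed (use m in \<open>auto simp: offsets_order_two_def\<close>)
qed

lemma spiral_offsets_order_two:
  assumes "4 \<le> m"
  shows "spiral_offsets m (2 * m) (offsets_order_two m) {2, m - 1}"
proof
  fix i assume i: "i < m"
  show "offsets_order_two m i \<subseteq> {..<2 * m}"
    using assms by (auto simp: offsets_order_two_def)
  show "card (offsets_order_two m i) = 3"
    using assms by (simp add: offsets_order_two_def card_3_distinct)
  show "1 \<in> offsets_order_two m i"
    by (simp add: offsets_order_two_def)
  show "2 * m - 1 \<notin> offsets_order_two m i"
    using assms by (auto simp: offsets_order_two_def)
  show "{2, m - 1} \<subseteq> offsets_order_two m i \<longleftrightarrow> i = 0"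
    using assms by (auto simp: offsets_order_two_def)
  show "2 * m - d \<in> offsets_order_two m ((i + d) mod m)"
    if "d \<in> offsets_order_two m i" "d \<noteq> 1" for d
    using assms i that by (rule offsets_order_two_reverse)
  show "\<not> m dvd d" if d: "d \<in> offsets_order_two m i" for d
  proof -
    have "2 * m - 2 = (m - 2) + m"
      using assms by simp
    then have "(2 * m - 2) mod m = ((m - 2) + m) mod m"
      by (simp only:)
    also have "\<dots> = (m - 2) mod m"
      by (rule mod_add_self2)
    also have "\<dots> = m - 2"
      using assms by simp
    finally have "(2 * m - 2) mod m = m - 2" .
    moreover have "2 mod m = 2" "(m - 1) mod m = m - 1" "(m + 1) mod m = 1"
      using assms by (auto intro!: mod_nat_eqI)
    ultimately have mods: "d mod m \<noteq> 0"
      if "d \<in> {1, 2, m - 1, m + 1, 2 * m - 2}" for d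
      using that assms by auto
    from d have "d \<in> {1, 2, m - 1, m + 1, 2 * m - 2}"
      by (auto simp: offsets_order_two_def split: if_splits)
    then have "d mod m \<noteq> 0"
      by (rule mods)
    then show ?thesis
      by (simp add: dvd_eq_mod_eq_0)
  qed
qed

lemma (in cyclic_mcay) admits_mPDR_cyclic:
  assumes "2 \<le> m" "2 \<le> n" "\<not> (m = 2 \<and> n < 5)" "\<not> (m = 3 \<and> n = 2)"
  shows "admits_mPDR G m 3"
proof -
  consider "m = 2" "5 \<le> n" | "3 \<le> m" "3 \<le> n" | "4 \<le> m" "n = 2"
    using assms by linarith
  then have "\<exists>D E. spiral_offsets m N D E"
  proof cases
    case 1
    then show ?thesis
      using spiral_offsets_two_layers by auto
  next
    case 2
    then show ?thesis
      using spiral_offsets_many_layers[of m N] by auto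
  next
    case 3
    then show ?thesis
      using spiral_offsets_order_two[of m] by (auto simp: mult.commute)
  qed
  then show ?thesis
    using spiral_design.admits_mPDR[OF spiral_design.intro[OF cyclic_mcay_axioms]] by blast
qed

theorem theorem1p1:
  fixes G :: "('a, 'b) monoid_scheme" and x :: 'a and m :: nat
  assumes "group G" and "finite (carrier G)"
    and "x \<in> carrier G" and "generate G {x} = carrier G"
    and "carrier G \<noteq> {\<one>\<^bsub>G\<^esub>}"
    and "m \<ge> 2"
  shows "admits_mPDR G m 3 \<longleftrightarrow>
           \<not> (m = 2 \<and> group.ord G x < 5) \<and> \<not> (m = 3 \<and> group.ord G x = 2)"
proof -
  interpret comm_group G
    using group.comm_group_if_generate_singleton[OF assms(1,3,4)] .
  interpret cyclic_mcay G x m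
    using assms by unfold_locales auto
  show ?thesis
  proof
    assume "admits_mPDR G m 3"
    then show "\<not> (m = 2 \<and> ord x < 5) \<and> \<not> (m = 3 \<and> ord x = 2)"
      using not_admits_mPDR_two_layers not_admits_mPDR_three_layers finite_carrier
      by (auto simp: ord_x_eq_card)
  next
    assume "\<not> (m = 2 \<and> ord x < 5) \<and> \<not> (m = 3 \<and> ord x = 2)"
    then show "admits_mPDR G m 3"
      using admits_mPDR_cyclic two_le_ord_x assms(5,6) by blast
  qed
qed

end
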